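(* Let $T:\mathcal L_n\rightrightarrows\mathcal L_n$ be defined by $z\in T(y)\iff P_{\mathcal N}(z)+P_{\mathcal M}(y)\in(\mathcal F+N_{\mathcal C})(P_{\mathcal N}(y)+P_{\mathcal M}(z))$, and let $A:\mathcal L_n\to\mathcal L_n$ be the symmetric positive definite invertible linear map $A(u)=P_{\mathcal N}(u)+rP_{\mathcal M}(u)$. Then the iterations of the IPHA are equivalent to those of the HIPPM applied to the operator $ATA$ with $\varepsilon_k=0$ and $c_k=r^{-1}$ for all $k$ (with the same choices of $\sigma_k$ and $\tau_k$), under the identification $z_k=x_k-r^{-1}w_k$ (equivalently $x_k=P_{\mathcal N}(z_k)$, $w_k=-rP_{\mathcal M}(z_k)$): an IPHA step from $(x_k,w_k)$ corresponds to an HIPPM step from $z_k$, the two stopping tests coincide, and the HIPPM update equals $z_{k+1}=x_{k+1}-r^{-1}w_{k+1}$.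
   Context: Multistage setting: $\Xi$ is a finite set of scenarios $\xi=(\xi_1,\dots,\xi_N)$ with probabilities $p(\xi)>0$; $n=n_1+\dots+n_N$. $\mathcal L_n$ is the space of functions $x:\Xi\to\mathbb R^n$, $x(\xi)=(x_1(\xi),\dots,x_N(\xi))$, $x_j(\xi)\in\mathbb R^{n_j}$, with inner product $\langle x,w\rangle=\sum_{\xi}p(\xi)\sum_{j}\langle x_j(\xi),w_j(\xi)\rangle$. $\mathcal N=\{x\in\mathcal L_n: x_j(\xi)\text{ does not depend on }\xi_j,\dots,\xi_N\}$, $\mathcal M=\mathcal N^\perp$, with orthogonal projections $P_{\mathcal N},P_{\mathcal M}$. For each $\xi$, $C(\xi)\subset\mathbb R^n$ is nonempty closed convex and $F(\cdot,\xi):\mathbb R^n\to\mathbb R^n$ is continuous monotone; $\mathcal C=\{x\in\mathcal L_n: x(\xi)\in C(\xi)\ \forall\xi\}$ and $\mathcal F(x)(\xi)=F(x(\xi),\xi)$. $r>0$ fixed. IPHA: choose $x_0\in\mathcal N$, $w_0\in\mathcal M$, $\bar\sigma\in(0,1)$, $\theta\in(0,1)$. At iteration $k$: choose $\sigma_k\in[0,\bar\sigma)$, find $\hat x^k,\hat w^k\in\mathcal L_n$ with $r(x_k(\xi)-\hat x^k(\xi))-w_k(\xi)\in F(\hat w^k(\xi),\xi)+N_{C(\xi)}(\hat w^k(\xi))$ for all $\xi$, $\delta^k=\hat w^k-\hat x^k$, and $\|\delta^k\|^2\le\sigma_k^2(\|a_k\|^2+\|b_k\|^2)$, where $a_k=x_k-P_{\mathcal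 N}(\hat x^k)+P_{\mathcal M}(\hat w^k)$, $b_k=x_k-P_{\mathcal N}(\hat w^k)+P_{\mathcal M}(\hat x^k)$. If $b_k=0$ stop; otherwise choose $\tau_k\in[1-\theta,1+\theta]$, set $\alpha_k=\langle a_k,b_k\rangle/\|a_k\|^2$, $x_{k+1}=x_k-\tau_k\alpha_k(x_k-P_{\mathcal N}(\hat x^k))$, $w_{k+1}=w_k+\tau_k\alpha_k rP_{\mathcal M}(\hat w^k)$. HIPPM (hybrid inexact proximal point method) for a maximal monotone operator $S$ on a Hilbert space, here with $\varepsilon_k=0$ and constant $c_k=c>0$: from $z_k$, choose $\sigma_k\in[0,\bar\sigma)$ and find $\hat z^k,\hat v^k$ with $\hat v^k\in S(\hat z^k)$, $\delta^k=c\hat v^k+\hat z^k-z_k$, $\|\delta^k\|^2\le\sigma_k^2(\|c\hat v^k\|^2+\|\hat z^k-z_k\|^2)$. Stop if $z_k=\hat z^k$; otherwise choose $\tau_k\in[1-\theta,1+\theta]$ and set $z_{k+1}=z_k-\tau_k a_k\hat v^k$ with $a_k=\langle\hat v^k,z_k-\hat z^k\rangle/\|\hat v^k\|^2$. *)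

theory Defs
  imports "HOL-Analysis.Analysis" "HOL-Library.Function_Algebras"
begin

text \<open>Scenarios are lists xi = [xi_1,...,xi_N] (stage j of the paper is list position j-1).
  An element of L_n is a function from scenarios to real^'n which vanishes outside Xi
  (so it is determined by its values on Xi). Each coordinate c of real^'n belongs to a stage
  stage c (0-based, stage c < N); the block x_j(xi) of the paper is the family of coordinates
  c with stage c = j-1. Pointwise addition / subtraction of functions come from the library;
  scalar multiplication is sc.\<close>

type_synonym ('b,'n) Lvec = "'b list \<Rightarrow> real^'n"

definition sc :: "real \<Rightarrow> ('b,'n::finite) Lvec \<Rightarrow> ('b,'n) Lvec" where
  "sc t x = (\<lambda>\<xi>. t *\<^sub>R x \<xi>)"

definition Lspace :: "'b list set \<Rightarrow> ('b,'n::finite) Lvec set" where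
  "Lspace Xi = {x. \<forall>\<xi>. \<xi> \<notin> Xi \<longrightarrow> x \<xi> = 0}"

definition ipL :: "'b list set \<Rightarrow> ('b list \<Rightarrow> real) \<Rightarrow> ('b,'n::finite) Lvec \<Rightarrow> ('b,'n) Lvec \<Rightarrow> real" where
  "ipL Xi p x w = (\<Sum>\<xi>\<in>Xi. p \<xi> * (x \<xi> \<bullet> w \<xi>))"

text \<open>Nonanticipative subspace N: the stage-j block does not depend on xi_j,...,xi_N,
  i.e. coordinate c only depends on the first stage c entries of the scenario.\<close>
definition NA :: "'b list set \<Rightarrow> ('n::finite \<Rightarrow> nat) \<Rightarrow> ('b,'n) Lvec set" where
  "NA Xi stage = {x \<in> Lspace Xi. \<forall>\<xi>\<in>Xi. \<forall>\<xi>'\<in>Xi. \<forall>c.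
      take (stage c) \<xi> = take (stage c) \<xi>' \<longrightarrow> x \<xi> $ c = x \<xi>' $ c}"

definition MA :: "'b list set \<Rightarrow> ('b list \<Rightarrow> real) \<Rightarrow> ('n::finite \<Rightarrow> nat) \<Rightarrow> ('b,'n) Lvec set" where
  "MA Xi p stage = {w \<in> Lspace Xi. \<forall>x\<in>NA Xi stage. ipL Xi p x w = 0}"

definition projL :: "'b list set \<Rightarrow> ('b list \<Rightarrow> real) \<Rightarrow> ('b,'n::finite) Lvec set
    \<Rightarrow> ('b,'n) Lvec \<Rightarrow> ('b,'n) Lvec" where
  "projL Xi p V u = (THE v. v \<in> V \<and> (\<forall>y\<in>V. ipL Xi p (u - v) y = 0))"

definition PN :: "'b list set \<Rightarrow> ('b list \<Rightarrow> real) \<Rightarrow> ('n::finite \<Rightarrow> nat) \<Rightarrow> ('b,'n) Lvec \<Rightarrow> ('b,'n) Lvec" where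
  "PN Xi p stage = projL Xi p (NA Xi stage)"

definition PM :: "'b list set \<Rightarrow> ('b list \<Rightarrow> real) \<Rightarrow> ('n::finite \<Rightarrow> nat) \<Rightarrow> ('b,'n) Lvec \<Rightarrow> ('b,'n) Lvec" where
  "PM Xi p stage = projL Xi p (MA Xi p stage)"

definition normal_cone :: "'v set \<Rightarrow> ('v \<Rightarrow> 'v \<Rightarrow> real) \<Rightarrow> 'v set \<Rightarrow> 'v \<Rightarrow> ('v::minus) set" where
  "normal_cone H ip K u = (if u \<in> K then {v \<in> H. \<forall>c\<in>K. ip v (c - u) \<le> 0} else {})"

definition Ccal :: "'b list set \<Rightarrow> ('b list \<Rightarrow> (real^'n::finite) set) \<Rightarrow> ('b,'n) Lvec set" where
  "Ccal Xi C = {x \<in> Lspace Xi. \<forall>\<xi>\<in>Xi. x \<xi> \<in> C \<xi>}"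

definition Fcal :: "'b list set \<Rightarrow> (real^'n::finite \<Rightarrow> 'b list \<Rightarrow> real^'n) \<Rightarrow> ('b,'n) Lvec \<Rightarrow> ('b,'n) Lvec" where
  "Fcal Xi F x = (\<lambda>\<xi>. if \<xi> \<in> Xi then F (x \<xi>) \<xi> else 0)"

definition FNC :: "'b list set \<Rightarrow> ('b list \<Rightarrow> real) \<Rightarrow> ('b list \<Rightarrow> (real^'n::finite) set)
    \<Rightarrow> (real^'n \<Rightarrow> 'b list \<Rightarrow> real^'n) \<Rightarrow> ('b,'n) Lvec \<Rightarrow> ('b,'n) Lvec set" where
  "FNC Xi p C F u = (\<lambda>v. Fcal Xi F u + v) ` normal_cone (Lspace Xi) (ipL Xi p) (Ccal Xi C) u"

definition Top :: "'b list set \<Rightarrow> ('b list \<Rightarrow> real) \<Rightarrow> ('n::finite \<Rightarrow> nat) \<Rightarrow> ('b list \<Rightarrow> (real^'n) set)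
    \<Rightarrow> (real^'n \<Rightarrow> 'b list \<Rightarrow> real^'n) \<Rightarrow> ('b,'n) Lvec \<Rightarrow> ('b,'n) Lvec set" where
  "Top Xi p stage C F y = (if y \<in> Lspace Xi then
      {z \<in> Lspace Xi. PN Xi p stage z + PM Xi p stage y
          \<in> FNC Xi p C F (PN Xi p stage y + PM Xi p stage z)} else {})"

definition Aop :: "'b list set \<Rightarrow> ('b list \<Rightarrow> real) \<Rightarrow> ('n::finite \<Rightarrow> nat) \<Rightarrow> real \<Rightarrow> ('b,'n) Lvec \<Rightarrow> ('b,'n) Lvec" where
  "Aop Xi p stage r u = PN Xi p stage u + sc r (PM Xi p stage u)"

definition ATA :: "'b list set \<Rightarrow> ('b list \<Rightarrow> real) \<Rightarrow> ('n::finite \<Rightarrow> nat) \<Rightarrow> ('b list \<Rightarrow> (real^'n) set)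
    \<Rightarrow> (real^'n \<Rightarrow> 'b list \<Rightarrow> real^'n) \<Rightarrow> real \<Rightarrow> ('b,'n) Lvec \<Rightarrow> ('b,'n) Lvec set" where
  "ATA Xi p stage C F r z = Aop Xi p stage r ` Top Xi p stage C F (Aop Xi p stage r z)"

definition ipha_a where
  "ipha_a Xi p stage x xh wh = x - PN Xi p stage xh + PM Xi p stage wh"
definition ipha_b where
  "ipha_b Xi p stage x xh wh = x - PN Xi p stage wh + PM Xi p stage xh"

definition ipha_ok :: "'b list set \<Rightarrow> ('b list \<Rightarrow> real) \<Rightarrow> ('n::finite \<Rightarrow> nat) \<Rightarrow> ('b list \<Rightarrow> (real^'n) set)
    \<Rightarrow> (real^'n \<Rightarrow> 'b list \<Rightarrow> real^'n) \<Rightarrow> real \<Rightarrow> real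
    \<Rightarrow> ('b,'n) Lvec \<Rightarrow> ('b,'n) Lvec \<Rightarrow> ('b,'n) Lvec \<Rightarrow> ('b,'n) Lvec \<Rightarrow> bool" where
  "ipha_ok Xi p stage C F r \<sigma> x w xh wh \<longleftrightarrow>
     xh \<in> Lspace Xi \<and> wh \<in> Lspace Xi \<and>
     (\<forall>\<xi>\<in>Xi. r *\<^sub>R (x \<xi> - xh \<xi>) - w \<xi>
         \<in> (\<lambda>v. F (wh \<xi>) \<xi> + v) ` normal_cone UNIV (\<bullet>) (C \<xi>) (wh \<xi>)) \<and>
     (let \<delta> = wh - xh; a = ipha_a Xi p stage x xh wh; b = ipha_b Xi p stage x xh wh in
        ipL Xi p \<delta> \<delta> \<le> \<sigma>\<^sup>2 * (ipL Xi p a a + ipL Xi p b b))"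

definition ipha_stop where
  "ipha_stop Xi p stage x xh wh \<longleftrightarrow> ipha_b Xi p stage x xh wh = 0"

definition ipha_update where
  "ipha_update Xi p stage r \<tau> x w xh wh =
     (let a = ipha_a Xi p stage x xh wh; b = ipha_b Xi p stage x xh wh;
          \<alpha> = ipL Xi p a b / ipL Xi p a a in
      (x - sc (\<tau> * \<alpha>) (x - PN Xi p stage xh), w + sc (\<tau> * \<alpha> * r) (PM Xi p stage wh)))"

definition hippm_ok :: "('b,'n::finite) Lvec set \<Rightarrow> (('b,'n) Lvec \<Rightarrow> ('b,'n) Lvec \<Rightarrow> real)
    \<Rightarrow> (('b,'n) Lvec \<Rightarrow> ('b,'n) Lvec set) \<Rightarrow> real \<Rightarrow> real
    \<Rightarrow> ('b,'n) Lvec \<Rightarrow> ('b,'n) Lvec \<Rightarrow> ('b,'n) Lvec \<Rightarrow> bool" where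
  "hippm_ok H ip S c \<sigma> z zh vh \<longleftrightarrow>
     zh \<in> H \<and> vh \<in> H \<and> vh \<in> S zh \<and>
     (let \<delta> = sc c vh + zh - z in
        ip \<delta> \<delta> \<le> \<sigma>\<^sup>2 * (ip (sc c vh) (sc c vh) + ip (zh - z) (zh - z)))"

definition hippm_stop where
  "hippm_stop z zh \<longleftrightarrow> z = zh"

definition hippm_update where
  "hippm_update ip \<tau> z zh vh =
     (let ak = ip vh (z - zh) / ip vh vh in z - sc (\<tau> * ak) vh)"

end

theory Submission
  imports Defs
begin

text \<open>Write z = x - w/r. Since x \<in> N and w \<in> M, the change of variables
  (xh, wh) \<mapsto> (zh, vh) = (P_N wh - P_M xh - w/r, r a) is a bijection of L_n \<times> L_n, and in the
  new variables zh - z = -b, vh/r = a and vh/r + zh - z = wh - xh = \<delta>; so the two relative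
  error tests coincide, and zh = z exactly when b = 0. As A is injective, vh \<in> ATA(zh) says
  A^-1 vh = r (x - P_N xh) + P_M wh \<in> T(A zh), which by the definition of T is the inclusion
  r (x - xh) - w \<in> (F + N_C)(wh); it splits into the scenario-wise inclusions of the IPHA because
  C is a product set and all p(\<xi>) are positive. Finally the HIPPM step length
  \<langle>vh, z - zh\<rangle> / \<parallel>vh\<parallel>^2 equals \<alpha>/r, so both updates agree.

  The projection P_N, defined only implicitly, is the coordinatewise conditional expectation
  given the scenario history up to the stage of the coordinate.\<close>

lemma sc_apply [simp]: "sc t x \<xi> = t *\<^sub>R x \<xi>"
  by (simp add: sc_def)

lemma sc_zero [simp]: "sc t 0 = 0"
  by (simp add: sc_def fun_eq_iff)

lemma mem_translation_iff: "y \<in> (+) a ` S \<longleftrightarrow> y - a \<in> (S :: 'a::ab_group_add set)"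
  by (metis add.commute diff_add_cancel image_iff add_diff_cancel_left')

lemma Lspace_closed [simp]:
  "0 \<in> Lspace Xi"
  "a \<in> Lspace Xi \<Longrightarrow> b \<in> Lspace Xi \<Longrightarrow> a + b \<in> Lspace Xi"
  "a \<in> Lspace Xi \<Longrightarrow> b \<in> Lspace Xi \<Longrightarrow> a - b \<in> Lspace Xi"
  "a \<in> Lspace Xi \<Longrightarrow> - a \<in> Lspace Xi"
  "a \<in> Lspace Xi \<Longrightarrow> sc t a \<in> Lspace Xi"
  by (simp_all add: Lspace_def)

lemma ipL_commute: "ipL Xi p a b = ipL Xi p b a"
  by (simp add: ipL_def inner_commute)

lemma ipL_diff_left: "ipL Xi p (a - b) c = ipL Xi p a c - ipL Xi p b c"
  by (simp add: ipL_def inner_diff_left right_diff_distrib sum_subtractf)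

lemma ipL_add_right: "ipL Xi p c (a + b) = ipL Xi p c a + ipL Xi p c b"
  by (simp add: ipL_def inner_add_right distrib_left sum.distrib)

lemma ipL_diff_right: "ipL Xi p c (a - b) = ipL Xi p c a - ipL Xi p c b"
  by (metis ipL_commute ipL_diff_left)

lemma ipL_scale_left: "ipL Xi p (sc t a) c = t * ipL Xi p a c"
  by (simp add: ipL_def sum_distrib_left algebra_simps)

lemma ipL_scale_right: "ipL Xi p c (sc t a) = t * ipL Xi p c a"
  by (metis ipL_commute ipL_scale_left)

lemma ipL_minus_minus: "ipL Xi p (- a) (- b) = ipL Xi p a b"
  by (simp add: ipL_def)

lemma ipL_self_eq_0D:
  assumes "finite Xi" "\<forall>\<xi>\<in>Xi. p \<xi> > 0" "a \<in> Lspace Xi" "ipL Xi p a a = 0"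
  shows "a = 0"
proof -
  have "\<forall>\<xi>\<in>Xi. p \<xi> * (a \<xi> \<bullet> a \<xi>) = 0"
    using assms sum_nonneg_eq_0_iff[of Xi "\<lambda>\<xi>. p \<xi> * (a \<xi> \<bullet> a \<xi>)"]
    by (simp add: ipL_def less_imp_le)
  then have "\<forall>\<xi>\<in>Xi. a \<xi> = 0"
    using assms(2) by fastforce
  then show "a = 0"
    using assms(3) by (auto simp: Lspace_def fun_eq_iff)
qed

lemma NA_subset_Lspace: "NA Xi stage \<subseteq> Lspace Xi"
  by (auto simp: NA_def)

lemma MA_subset_Lspace: "MA Xi p stage \<subseteq> Lspace Xi"
  by (auto simp: MA_def)

lemma zero_in_NA [simp]: "0 \<in> NA Xi stage"
  by (simp add: NA_def Lspace_def)

lemma NA_closed [simp]: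
  assumes "a \<in> NA Xi stage" "b \<in> NA Xi stage"
  shows "a + b \<in> NA Xi stage" "a - b \<in> NA Xi stage"
proof -
  have "(a + b) \<xi> $ c = (a + b) \<xi>' $ c \<and> (a - b) \<xi> $ c = (a - b) \<xi>' $ c"
    if "\<xi> \<in> Xi" "\<xi>' \<in> Xi" "take (stage c) \<xi> = take (stage c) \<xi>'" for \<xi> \<xi>' c
  proof -
    have "a \<xi> $ c = a \<xi>' $ c" "b \<xi> $ c = b \<xi>' $ c"
      using assms that unfolding NA_def by blast+
    then show ?thesis
      by simp
  qed
  moreover have "a + b \<in> Lspace Xi" "a - b \<in> Lspace Xi"
    using assms NA_subset_Lspace[of Xi stage] by (simp_all add: subset_iff)
  ultimately show "a + b \<in> NA Xi stage" "a - b \<in> NA Xi stage"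
    unfolding NA_def by blast+
qed

lemma NA_scale [simp]:
  assumes "a \<in> NA Xi stage"
  shows "sc t a \<in> NA Xi stage"
proof -
  have "sc t a \<xi> $ c = sc t a \<xi>' $ c"
    if "\<xi> \<in> Xi" "\<xi>' \<in> Xi" "take (stage c) \<xi> = take (stage c) \<xi>'" for \<xi> \<xi>' c
  proof -
    have "a \<xi> $ c = a \<xi>' $ c"
      using assms that unfolding NA_def by blast
    then show ?thesis
      by simp
  qed
  moreover have "sc t a \<in> Lspace Xi"
    using assms NA_subset_Lspace[of Xi stage] by (simp add: subset_iff)
  ultimately show ?thesis
    unfolding NA_def by blast
qed

lemma MA_I:
  "w \<in> Lspace Xi \<Longrightarrow> (\<And>x. x \<in> NA Xi stage \<Longrightarrow> ipL Xi p x w = 0) \<Longrightarrow> w \<in> MA Xi p stage"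
  unfolding MA_def by blast

lemma zero_in_MA [simp]: "0 \<in> MA Xi p stage"
  by (rule MA_I) (simp_all add: ipL_def)

lemma MA_closed [simp]:
  assumes "a \<in> MA Xi p stage" "b \<in> MA Xi p stage"
  shows "a + b \<in> MA Xi p stage" "a - b \<in> MA Xi p stage"
  using assms unfolding MA_def by (auto simp: ipL_add_right ipL_diff_right)

lemma MA_scale [simp]: "a \<in> MA Xi p stage \<Longrightarrow> sc t a \<in> MA Xi p stage"
  unfolding MA_def by (auto simp: ipL_scale_right)

lemma projL_eqI:
  assumes "finite Xi" "\<forall>\<xi>\<in>Xi. p \<xi> > 0" "V \<subseteq> Lspace Xi"
    and "\<And>a b. a \<in> V \<Longrightarrow> b \<in> V \<Longrightarrow> a - b \<in> V"
    and "v \<in> V" "\<forall>y\<in>V. ipL Xi p (u - v) y = 0"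
  shows "projL Xi p V u = v"
  unfolding projL_def
proof (rule the_equality)
  fix v' assume v': "v' \<in> V \<and> (\<forall>y\<in>V. ipL Xi p (u - v') y = 0)"
  have "v - v' = (u - v') - (u - v)"
    by simp
  then have "\<forall>y\<in>V. ipL Xi p (v - v') y = 0"
    using v' assms(6) by (simp add: ipL_diff_left)
  moreover have "v - v' \<in> V"
    using v' assms(4,5) by blast
  ultimately have "v - v' = 0"
    using ipL_self_eq_0D assms(1-3) by blast
  then show "v' = v"
    by simp
qed (use assms in blast)

definition cond_mean :: "'a set \<Rightarrow> ('a \<Rightarrow> real) \<Rightarrow> ('a \<Rightarrow> 'k) \<Rightarrow> ('a \<Rightarrow> real) \<Rightarrow> 'a \<Rightarrow> real" where
  "cond_mean A p g v a =
     (\<Sum>a'\<in>{a'\<in>A. g a' = g a}. p a' * v a') / (\<Sum>a'\<in>{a'\<in>A. g a' = g a}. p a')"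

lemma cond_mean_cong: "g a = g a' \<Longrightarrow> cond_mean A p g v a = cond_mean A p g v a'"
  by (simp add: cond_mean_def)

lemma sum_mult_minus_cond_mean_eq_0:
  assumes "finite A" "\<forall>a\<in>A. p a > 0"
    and f_const: "\<And>a a'. a \<in> A \<Longrightarrow> a' \<in> A \<Longrightarrow> g a = g a' \<Longrightarrow> f a = f a'"
  shows "(\<Sum>a\<in>A. p a * f a * (v a - cond_mean A p g v a)) = 0"
proof -
  let ?h = "\<lambda>a. p a * f a * (v a - cond_mean A p g v a)"
  have "(\<Sum>a\<in>A. ?h a) = (\<Sum>k\<in>g ` A. \<Sum>a\<in>{a\<in>A. g a = k}. ?h a)"
    by (rule sum.image_gen[OF assms(1)])
  also have "\<dots> = 0"
  proof (rule sum.neutral, rule ballI)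
    fix k assume "k \<in> g ` A"
    then obtain a0 where a0: "a0 \<in> A" "g a0 = k"
      by auto
    let ?K = "{a\<in>A. g a = k}"
    define S where "S = (\<Sum>a\<in>?K. p a * v a)"
    define P where "P = (\<Sum>a\<in>?K. p a)"
    have "P > 0"
      unfolding P_def using assms a0 by (intro sum_pos2[of _ a0]) auto
    have "?h a = f a0 * (p a * v a) - f a0 * (S / P) * p a" if "a \<in> ?K" for a
    proof -
      have "{a'\<in>A. g a' = g a} = ?K"
        using that by auto
      then have "cond_mean A p g v a = S / P"
        by (simp add: cond_mean_def S_def P_def)
      then show ?thesis
        using f_const[of a a0] that a0 by (simp add: algebra_simps)
    qed
    then have "(\<Sum>a\<in>?K. ?h a) = f a0 * S - f a0 * (S / P) * P"
      by (simp add: sum_subtractf sum_distrib_left S_def P_def)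
    then show "(\<Sum>a\<in>?K. ?h a) = 0"
      using \<open>P > 0\<close> by simp
  qed
  finally show ?thesis .
qed

lemma ipha_stop_iff_hippm_stop:
  "ipha_stop Xi p stage x xh wh \<longleftrightarrow>
    hippm_stop (x - sc (1/r) w) (PN Xi p stage wh - PM Xi p stage xh - sc (1/r) w)"
proof -
  have "PN Xi p stage wh - PM Xi p stage xh - sc (1/r) w
      = (x - sc (1/r) w) - ipha_b Xi p stage x xh wh"
    by (simp add: ipha_b_def)
  then show ?thesis
    unfolding ipha_stop_def hippm_stop_def by simp
qed

lemma hippm_update_eq_ipha_update:
  assumes "r \<noteq> 0"
  shows "hippm_update (ipL Xi p) \<tau> (x - sc (1/r) w)
      (PN Xi p stage wh - PM Xi p stage xh - sc (1/r) w) (sc r (x - PN Xi p stage xh + PM Xi p stage wh))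
    = fst (ipha_update Xi p stage r \<tau> x w xh wh) - sc (1/r) (snd (ipha_update Xi p stage r \<tau> x w xh wh))"
proof -
  define a where "a = ipha_a Xi p stage x xh wh"
  define b where "b = ipha_b Xi p stage x xh wh"
  define \<alpha> where "\<alpha> = ipL Xi p a b / ipL Xi p a a"
  have upd: "ipha_update Xi p stage r \<tau> x w xh wh
      = (x - sc (\<tau> * \<alpha>) (x - PN Xi p stage xh), w + sc (\<tau> * \<alpha> * r) (PM Xi p stage wh))"
    by (simp add: ipha_update_def a_def b_def \<alpha>_def Let_def)
  have b_eq: "x - sc (1/r) w - (PN Xi p stage wh - PM Xi p stage xh - sc (1/r) w) = b"
    by (simp add: b_def ipha_b_def)
  have a_eq: "sc r (x - PN Xi p stage xh + PM Xi p stage wh) = sc r a"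
    by (simp add: a_def ipha_a_def)
  have "hippm_update (ipL Xi p) \<tau> (x - sc (1/r) w)
      (PN Xi p stage wh - PM Xi p stage xh - sc (1/r) w) (sc r (x - PN Xi p stage xh + PM Xi p stage wh))
    = x - sc (1/r) w - sc (\<tau> * \<alpha>) a"
    unfolding hippm_update_def Let_def a_eq b_eq using assms
    by (simp add: ipL_scale_left ipL_scale_right \<alpha>_def fun_eq_iff)
  also have "\<dots> = fst (ipha_update Xi p stage r \<tau> x w xh wh)
      - sc (1/r) (snd (ipha_update Xi p stage r \<tau> x w xh wh))"
    unfolding upd using assms by (simp add: a_def ipha_a_def fun_eq_iff algebra_simps)
  finally show ?thesis .
qed

locale scenario_space =
  fixes Xi :: "'b list set" and p :: "'b list \<Rightarrow> real" and stage :: "'n::finite \<Rightarrow> nat"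
  assumes finite_Xi: "finite Xi" and p_pos: "\<forall>\<xi>\<in>Xi. p \<xi> > 0"
begin

abbreviation L :: "('b,'n) Lvec set" where "L \<equiv> Lspace Xi"
abbreviation ip :: "('b,'n) Lvec \<Rightarrow> ('b,'n) Lvec \<Rightarrow> real" where "ip \<equiv> ipL Xi p"
abbreviation Nspace :: "('b,'n) Lvec set" where "Nspace \<equiv> NA Xi stage"
abbreviation Mspace :: "('b,'n) Lvec set" where "Mspace \<equiv> MA Xi p stage"
abbreviation projN :: "('b,'n) Lvec \<Rightarrow> ('b,'n) Lvec" where "projN \<equiv> PN Xi p stage"
abbreviation projM :: "('b,'n) Lvec \<Rightarrow> ('b,'n) Lvec" where "projM \<equiv> PM Xi p stage"

lemma Nspace_Lspace [simp]: "x \<in> Nspace \<Longrightarrow> x \<in> L"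
  using NA_subset_Lspace by blast

lemma Mspace_Lspace [simp]: "x \<in> Mspace \<Longrightarrow> x \<in> L"
  using MA_subset_Lspace by blast

definition condexp :: "('b,'n) Lvec \<Rightarrow> ('b,'n) Lvec" where
  "condexp u = (\<lambda>\<xi>. if \<xi> \<in> Xi
     then (\<chi> c. cond_mean Xi p (take (stage c)) (\<lambda>\<xi>'. u \<xi>' $ c) \<xi>) else 0)"

lemma condexp_in_Nspace: "condexp u \<in> Nspace"
proof -
  have "condexp u \<xi> $ c = condexp u \<xi>' $ c"
    if "\<xi> \<in> Xi" "\<xi>' \<in> Xi" "take (stage c) \<xi> = take (stage c) \<xi>'" for \<xi> \<xi>' c
    using that cond_mean_cong[of "take (stage c)"] by (simp add: condexp_def)
  moreover have "condexp u \<in> L"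
    by (simp add: Lspace_def condexp_def)
  ultimately show ?thesis
    unfolding NA_def by blast
qed

lemma minus_condexp_in_Mspace:
  assumes "u \<in> L"
  shows "u - condexp u \<in> Mspace"
proof (rule MA_I)
  show "u - condexp u \<in> L"
    using assms condexp_in_Nspace by simp
next
  fix x assume "x \<in> Nspace"
  show "ip x (u - condexp u) = 0"
  proof -
    have x_adapted: "x \<xi> $ c = x \<xi>' $ c"
      if "\<xi> \<in> Xi" "\<xi>' \<in> Xi" "take (stage c) \<xi> = take (stage c) \<xi>'" for c \<xi> \<xi>'
      using \<open>x \<in> Nspace\<close> that unfolding NA_def by blast
    have "ip x (u - condexp u)
        = (\<Sum>c\<in>UNIV. \<Sum>\<xi>\<in>Xi. p \<xi> * x \<xi> $ c * (u \<xi> $ c - condexp u \<xi> $ c))"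
      unfolding ipL_def inner_vec_def
      by (subst sum.swap) (simp add: sum_distrib_left algebra_simps)
    also have "\<dots> = (\<Sum>c\<in>UNIV. \<Sum>\<xi>\<in>Xi.
        p \<xi> * x \<xi> $ c * (u \<xi> $ c - cond_mean Xi p (take (stage c)) (\<lambda>\<xi>'. u \<xi>' $ c) \<xi>))"
      by (intro sum.cong) (auto simp: condexp_def)
    also have "\<dots> = 0"
    proof (rule sum.neutral, rule ballI)
      fix c :: 'n
      show "(\<Sum>\<xi>\<in>Xi. p \<xi> * x \<xi> $ c *
          (u \<xi> $ c - cond_mean Xi p (take (stage c)) (\<lambda>\<xi>'. u \<xi>' $ c) \<xi>)) = 0"
        using finite_Xi p_pos x_adapted by (rule sum_mult_minus_cond_mean_eq_0)
    qed
    finally show ?thesis .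
  qed
qed

lemma projN_eqI:
  assumes "u \<in> L" "n \<in> Nspace" "u - n \<in> Mspace"
  shows "projN u = n"
proof -
  have "\<forall>y\<in>Nspace. ip y (u - n) = 0"
    using assms(3) unfolding MA_def by blast
  then have "\<forall>y\<in>Nspace. ip (u - n) y = 0"
    by (simp add: ipL_commute)
  with assms(2) show ?thesis
    unfolding PN_def by (intro projL_eqI[OF finite_Xi p_pos NA_subset_Lspace]) auto
qed

lemma projM_eqI:
  assumes "u \<in> L" "n \<in> Nspace" "u - n \<in> Mspace"
  shows "projM u = u - n"
proof -
  have "\<forall>y\<in>Mspace. ip (u - (u - n)) y = 0"
    using assms(2) unfolding MA_def by simp
  with assms(3) show ?thesis
    unfolding PM_def by (intro projL_eqI[OF finite_Xi p_pos MA_subset_Lspace]) auto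
qed

lemma projN_condexp: "u \<in> L \<Longrightarrow> projN u = condexp u"
  by (rule projN_eqI) (simp_all add: condexp_in_Nspace minus_condexp_in_Mspace)

lemma projN_in_Nspace [simp]: "u \<in> L \<Longrightarrow> projN u \<in> Nspace"
  by (simp add: projN_condexp condexp_in_Nspace)

lemma minus_projN_in_Mspace: "u \<in> L \<Longrightarrow> u - projN u \<in> Mspace"
  by (simp add: projN_condexp minus_condexp_in_Mspace)

lemma projM_eq: "u \<in> L \<Longrightarrow> projM u = u - projN u"
  by (rule projM_eqI) (simp_all add: minus_projN_in_Mspace)

lemma projM_in_Mspace [simp]: "u \<in> L \<Longrightarrow> projM u \<in> Mspace"
  by (simp add: projM_eq minus_projN_in_Mspace)

lemma projN_Nspace [simp]: "x \<in> Nspace \<Longrightarrow> projN x = x"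
  by (rule projN_eqI) simp_all

lemma projN_Mspace [simp]: "x \<in> Mspace \<Longrightarrow> projN x = 0"
  by (rule projN_eqI) simp_all

lemma projN_add [simp]: "a \<in> L \<Longrightarrow> b \<in> L \<Longrightarrow> projN (a + b) = projN a + projN b"
proof (rule projN_eqI)
  assume "a \<in> L" "b \<in> L"
  have "a + b - (projN a + projN b) = (a - projN a) + (b - projN b)"
    by simp
  then show "a + b - (projN a + projN b) \<in> Mspace"
    using \<open>a \<in> L\<close> \<open>b \<in> L\<close> by (simp only: MA_closed minus_projN_in_Mspace)
qed simp_all

lemma projN_scale [simp]: "a \<in> L \<Longrightarrow> projN (sc t a) = sc t (projN a)"
proof (rule projN_eqI)
  assume "a \<in> L"
  have "sc t a - sc t (projN a) = sc t (a - projN a)"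
    by (simp add: fun_eq_iff algebra_simps)
  then show "sc t a - sc t (projN a) \<in> Mspace"
    using \<open>a \<in> L\<close> by (simp only: MA_scale minus_projN_in_Mspace)
qed simp_all

lemma projN_uminus [simp]:
  assumes "a \<in> L"
  shows "projN (- a) = - projN a"
proof -
  have "- a = sc (-1) a" "- projN a = sc (-1) (projN a)"
    by (simp_all add: fun_eq_iff)
  then show ?thesis
    using projN_scale[OF assms] by metis
qed

lemma projN_diff [simp]: "a \<in> L \<Longrightarrow> b \<in> L \<Longrightarrow> projN (a - b) = projN a - projN b"
  using projN_add[of a "- b"] by simp

lemma projN_plus_projM: "u \<in> L \<Longrightarrow> projN u + projM u = u"
  by (simp add: projM_eq)

lemma projN_Aop: "u \<in> L \<Longrightarrow> projN (Aop Xi p stage r u) = projN u"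
  by (simp add: Aop_def)

lemma projM_Aop: "u \<in> L \<Longrightarrow> projM (Aop Xi p stage r u) = sc r (projM u)"
  by (simp add: Aop_def projM_eq)

lemma inj_on_Aop:
  assumes "r \<noteq> 0"
  shows "inj_on (Aop Xi p stage r) L"
proof (rule inj_onI)
  fix u v assume "u \<in> L" "v \<in> L" and eq: "Aop Xi p stage r u = Aop Xi p stage r v"
  have "projN u = projN v"
    using projN_Aop[OF \<open>u \<in> L\<close>] projN_Aop[OF \<open>v \<in> L\<close>] eq by metis
  moreover have "sc r (projM u) = sc r (projM v)"
    using projM_Aop[OF \<open>u \<in> L\<close>] projM_Aop[OF \<open>v \<in> L\<close>] eq by metis
  then have "projM u = projM v"
    using assms by (simp add: fun_eq_iff)
  ultimately show "u = v"
    using projN_plus_projM[OF \<open>u \<in> L\<close>] projN_plus_projM[OF \<open>v \<in> L\<close>] by metis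
qed

lemma Top_subset_Lspace: "Top Xi p stage C F y \<subseteq> L"
  by (auto simp: Top_def)

lemma Aop_mem_ATA_iff:
  assumes "r \<noteq> 0" "y \<in> L"
  shows "Aop Xi p stage r y \<in> ATA Xi p stage C F r u \<longleftrightarrow> y \<in> Top Xi p stage C F (Aop Xi p stage r u)"
  unfolding ATA_def
  using inj_on_image_mem_iff[OF inj_on_Aop[OF assms(1)] assms(2) Top_subset_Lspace] .

lemma normal_cone_Ccal_iff:
  assumes "u \<in> L" "v \<in> L"
  shows "v \<in> normal_cone L ip (Ccal Xi C) u \<longleftrightarrow>
    (\<forall>\<xi>\<in>Xi. v \<xi> \<in> normal_cone UNIV (\<bullet>) (C \<xi>) (u \<xi>))"
proof
  assume v: "v \<in> normal_cone L ip (Ccal Xi C) u"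
  then have "u \<in> Ccal Xi C"
    by (simp add: normal_cone_def split: if_splits)
  show "\<forall>\<xi>\<in>Xi. v \<xi> \<in> normal_cone UNIV (\<bullet>) (C \<xi>) (u \<xi>)"
  proof
    fix \<xi>0 assume "\<xi>0 \<in> Xi"
    have "v \<xi>0 \<bullet> (c0 - u \<xi>0) \<le> 0" if "c0 \<in> C \<xi>0" for c0
    proof -
      have "u(\<xi>0 := c0) \<in> Ccal Xi C"
        using \<open>u \<in> Ccal Xi C\<close> \<open>\<xi>0 \<in> Xi\<close> that by (auto simp: Ccal_def Lspace_def)
      then have "ip v (u(\<xi>0 := c0) - u) \<le> 0"
        using v by (simp add: normal_cone_def split: if_splits)
      also have "ip v (u(\<xi>0 := c0) - u) = p \<xi>0 * (v \<xi>0 \<bullet> (c0 - u \<xi>0))"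
        unfolding ipL_def using finite_Xi \<open>\<xi>0 \<in> Xi\<close>
        by (subst sum.remove[of _ \<xi>0]) auto
      finally have "p \<xi>0 * (v \<xi>0 \<bullet> (c0 - u \<xi>0)) \<le> 0" .
      moreover have "p \<xi>0 > 0"
        using p_pos \<open>\<xi>0 \<in> Xi\<close> by blast
      ultimately show ?thesis
        by (simp add: mult_le_0_iff)
    qed
    then show "v \<xi>0 \<in> normal_cone UNIV (\<bullet>) (C \<xi>0) (u \<xi>0)"
      using \<open>u \<in> Ccal Xi C\<close> \<open>\<xi>0 \<in> Xi\<close> by (simp add: normal_cone_def Ccal_def)
  qed
next
  assume v: "\<forall>\<xi>\<in>Xi. v \<xi> \<in> normal_cone UNIV (\<bullet>) (C \<xi>) (u \<xi>)"
  then have "u \<in> Ccal Xi C"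
    using assms(1) by (auto simp: Ccal_def normal_cone_def split: if_splits)
  moreover have "ip v (c - u) \<le> 0" if "c \<in> Ccal Xi C" for c
    unfolding ipL_def
  proof (rule sum_nonpos)
    fix \<xi> assume "\<xi> \<in> Xi"
    then have "v \<xi> \<bullet> (c \<xi> - u \<xi>) \<le> 0"
      using v that by (auto simp: normal_cone_def Ccal_def split: if_splits)
    then show "p \<xi> * (v \<xi> \<bullet> (c - u) \<xi>) \<le> 0"
      using p_pos \<open>\<xi> \<in> Xi\<close> by (simp add: mult_nonneg_nonpos less_imp_le)
  qed
  ultimately show "v \<in> normal_cone L ip (Ccal Xi C) u"
    using assms(2) by (simp add: normal_cone_def)
qed

lemma mem_FNC_iff:
  assumes "g \<in> L" "u \<in> L"
  shows "g \<in> FNC Xi p C F u \<longleftrightarrow>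
    (\<forall>\<xi>\<in>Xi. g \<xi> \<in> (+) (F (u \<xi>) \<xi>) ` normal_cone UNIV (\<bullet>) (C \<xi>) (u \<xi>))"
proof -
  have "g - Fcal Xi F u \<in> L"
    using assms(1) by (simp add: Lspace_def Fcal_def)
  moreover have "(g - Fcal Xi F u) \<xi> = g \<xi> - F (u \<xi>) \<xi>" if "\<xi> \<in> Xi" for \<xi>
    using that by (simp add: Fcal_def)
  ultimately show ?thesis
    unfolding FNC_def mem_translation_iff
    using normal_cone_Ccal_iff[OF assms(2)] by simp
qed

lemma ipha_update_in_Nspace_Mspace:
  assumes "x \<in> Nspace" "w \<in> Mspace" "xh \<in> L" "wh \<in> L"
  shows "fst (ipha_update Xi p stage r \<tau> x w xh wh) \<in> Nspace"
    and "snd (ipha_update Xi p stage r \<tau> x w xh wh) \<in> Mspace"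
  using assms by (simp_all add: ipha_update_def Let_def)

lemma mem_ATA_iff_ipha_inclusion:
  assumes "r > 0" "x \<in> Nspace" "w \<in> Mspace" "xh \<in> L" "wh \<in> L"
  shows "sc r (x - projN xh + projM wh) \<in> ATA Xi p stage C F r (projN wh - projM xh - sc (1/r) w)
    \<longleftrightarrow> (\<forall>\<xi>\<in>Xi. r *\<^sub>R (x \<xi> - xh \<xi>) - w \<xi>
           \<in> (+) (F (wh \<xi>) \<xi>) ` normal_cone UNIV (\<bullet>) (C \<xi>) (wh \<xi>))"
proof -
  define y where "y = sc r (x - projN xh) + projM wh"
  define u where "u = Aop Xi p stage r (projN wh - projM xh - sc (1/r) w)"
  have "x \<in> L" "w \<in> L" "y \<in> L" "u \<in> L"
    using assms by (simp_all add: y_def u_def Aop_def)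
  have "Aop Xi p stage r y = sc r (x - projN xh + projM wh)"
    using assms by (simp add: y_def Aop_def projM_eq fun_eq_iff algebra_simps)
  moreover have "projN y + projM u = sc r (x - xh) - w"
    using assms \<open>x \<in> L\<close> \<open>w \<in> L\<close> projN_plus_projM[of xh]
    by (simp add: y_def u_def Aop_def projM_eq fun_eq_iff algebra_simps)
  moreover have "projN u + projM y = wh"
    using assms \<open>x \<in> L\<close> \<open>w \<in> L\<close> projN_plus_projM[of wh]
    by (simp add: y_def u_def Aop_def projM_eq fun_eq_iff algebra_simps)
  ultimately have "sc r (x - projN xh + projM wh) \<in> ATA Xi p stage C F r (projN wh - projM xh - sc (1/r) w)
      \<longleftrightarrow> sc r (x - xh) - w \<in> FNC Xi p C F wh"
    using Aop_mem_ATA_iff[of r y] assms \<open>y \<in> L\<close> \<open>u \<in> L\<close>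
    by (simp add: Top_def u_def)
  also have "\<dots> \<longleftrightarrow> (\<forall>\<xi>\<in>Xi. r *\<^sub>R (x \<xi> - xh \<xi>) - w \<xi>
           \<in> (+) (F (wh \<xi>) \<xi>) ` normal_cone UNIV (\<bullet>) (C \<xi>) (wh \<xi>))"
    using assms \<open>x \<in> L\<close> \<open>w \<in> L\<close> by (simp add: mem_FNC_iff)
  finally show ?thesis .
qed

lemma hippm_ok_iff_ipha_ok:
  assumes "r > 0" "x \<in> Nspace" "w \<in> Mspace" "xh \<in> L" "wh \<in> L"
  shows "hippm_ok L ip (ATA Xi p stage C F r) (1/r) \<sigma> (x - sc (1/r) w)
      (projN wh - projM xh - sc (1/r) w) (sc r (x - projN xh + projM wh))
    \<longleftrightarrow> ipha_ok Xi p stage C F r \<sigma> x w xh wh"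
proof -
  define z where "z = x - sc (1/r) w"
  define zh where "zh = projN wh - projM xh - sc (1/r) w"
  define vh where "vh = sc r (x - projN xh + projM wh)"
  define a where "a = ipha_a Xi p stage x xh wh"
  define b where "b = ipha_b Xi p stage x xh wh"
  have "zh \<in> L" "vh \<in> L"
    using assms by (simp_all add: zh_def vh_def)
  have scaled_vh: "sc (1/r) vh = a"
    using assms(1) by (simp add: vh_def a_def ipha_a_def fun_eq_iff)
  have step: "zh - z = - b"
    by (simp add: zh_def z_def b_def ipha_b_def)
  have delta: "a + zh - z = wh - xh"
    using projN_plus_projM[OF assms(4)] projN_plus_projM[OF assms(5)]
    by (simp add: a_def zh_def z_def ipha_a_def algebra_simps)
  show ?thesis
    unfolding z_def[symmetric] zh_def[symmetric] vh_def[symmetric]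
    unfolding hippm_ok_def ipha_ok_def Let_def scaled_vh step delta ipL_minus_minus
      a_def[symmetric] b_def[symmetric] mem_ATA_iff_ipha_inclusion[OF assms, folded zh_def vh_def]
    using assms(4,5) \<open>zh \<in> L\<close> \<open>vh \<in> L\<close> by blast
qed

lemma ipha_trial_points_exist:
  assumes "r \<noteq> 0" "x \<in> Nspace" "w \<in> Mspace" "zh \<in> L" "vh \<in> L"
  obtains xh wh where "xh \<in> L" "wh \<in> L"
    "zh = projN wh - projM xh - sc (1/r) w" "vh = sc r (x - projN xh + projM wh)"
proof
  define wh where "wh = projN zh + sc (1/r) (projM vh)"
  define xh where "xh = x - sc (1/r) (projN vh) - projM zh - sc (1/r) w"
  show "xh \<in> L" "wh \<in> L"
    using assms by (simp_all add: xh_def wh_def)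
  show "zh = projN wh - projM xh - sc (1/r) w"
    using assms projN_plus_projM[OF assms(4)]
    by (simp add: wh_def xh_def projM_eq fun_eq_iff algebra_simps)
  show "vh = sc r (x - projN xh + projM wh)"
    using assms projN_plus_projM[OF assms(5)]
    by (simp add: wh_def xh_def projM_eq fun_eq_iff algebra_simps)
qed

lemma hippm_ok_iff_ex_ipha_ok:
  assumes "r > 0" "x \<in> Nspace" "w \<in> Mspace"
  shows "hippm_ok L ip (ATA Xi p stage C F r) (1/r) \<sigma> (x - sc (1/r) w) zh vh
    \<longleftrightarrow> (\<exists>xh wh. ipha_ok Xi p stage C F r \<sigma> x w xh wh
           \<and> zh = projN wh - projM xh - sc (1/r) w \<and> vh = sc r (x - projN xh + projM wh))"
proof
  assume ok: "hippm_ok L ip (ATA Xi p stage C F r) (1/r) \<sigma> (x - sc (1/r) w) zh vh"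
  then have "zh \<in> L" "vh \<in> L"
    by (simp_all add: hippm_ok_def)
  moreover have "r \<noteq> 0"
    using assms(1) by simp
  ultimately obtain xh wh where "xh \<in> L" "wh \<in> L"
    "zh = projN wh - projM xh - sc (1/r) w" "vh = sc r (x - projN xh + projM wh)"
    using assms(2,3) by (metis ipha_trial_points_exist)
  with ok show "\<exists>xh wh. ipha_ok Xi p stage C F r \<sigma> x w xh wh
      \<and> zh = projN wh - projM xh - sc (1/r) w \<and> vh = sc r (x - projN xh + projM wh)"
    using hippm_ok_iff_ipha_ok[OF assms] by blast
next
  assume "\<exists>xh wh. ipha_ok Xi p stage C F r \<sigma> x w xh wh
      \<and> zh = projN wh - projM xh - sc (1/r) w \<and> vh = sc r (x - projN xh + projM wh)"
  then obtain xh wh where ok: "ipha_ok Xi p stage C F r \<sigma> x w xh wh"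
    and "zh = projN wh - projM xh - sc (1/r) w" "vh = sc r (x - projN xh + projM wh)"
    by blast
  moreover have "xh \<in> L" "wh \<in> L"
    using ok by (simp_all add: ipha_ok_def)
  ultimately show "hippm_ok L ip (ATA Xi p stage C F r) (1/r) \<sigma> (x - sc (1/r) w) zh vh"
    using hippm_ok_iff_ipha_ok[OF assms] by blast
qed

end

theorem theorem2:
  fixes Xi :: "'b list set" and p :: "'b list \<Rightarrow> real" and N :: nat
    and stage :: "'n::finite \<Rightarrow> nat"
    and C :: "'b list \<Rightarrow> (real^'n) set" and F :: "real^'n \<Rightarrow> 'b list \<Rightarrow> real^'n"
    and r \<sigma>bar \<theta> \<sigma> :: real and x w :: "('b,'n) Lvec"
  assumes Xi_fin: "finite Xi"
    and Xi_len: "\<forall>\<xi>\<in>Xi. length \<xi> = N"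
    and p_pos: "\<forall>\<xi>\<in>Xi. p \<xi> > 0"
    and stage_lt: "\<forall>c. stage c < N"
    and C_ne: "\<forall>\<xi>\<in>Xi. C \<xi> \<noteq> {}" and C_cl: "\<forall>\<xi>\<in>Xi. closed (C \<xi>)"
    and C_cvx: "\<forall>\<xi>\<in>Xi. convex (C \<xi>)"
    and F_cont: "\<forall>\<xi>\<in>Xi. continuous_on UNIV (\<lambda>u. F u \<xi>)"
    and F_mono: "\<forall>\<xi>\<in>Xi. \<forall>u v. (F u \<xi> - F v \<xi>) \<bullet> (u - v) \<ge> 0"
    and r_pos: "r > 0"
    and sbar: "0 < \<sigma>bar" "\<sigma>bar < 1" and th: "0 < \<theta>" "\<theta> < 1"
    and sig: "0 \<le> \<sigma>" "\<sigma> < \<sigma>bar"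
    and xN: "x \<in> NA Xi stage" and wM: "w \<in> MA Xi p stage"
  shows "let z = x - sc (1 / r) w;
             PN' = PN Xi p stage; PM' = PM Xi p stage;
             S = ATA Xi p stage C F r;
             zhat = (\<lambda>xh wh. PN' wh - PM' xh - sc (1 / r) w);
             vhat = (\<lambda>xh wh. sc r (x - PN' xh + PM' wh))
         in x = PN' z \<and> w = sc (- r) (PM' z) \<and>
            (\<forall>zh vh. hippm_ok (Lspace Xi) (ipL Xi p) S (1 / r) \<sigma> z zh vh \<longleftrightarrow>
                (\<exists>xh wh. ipha_ok Xi p stage C F r \<sigma> x w xh wh \<and> zh = zhat xh wh \<and> vh = vhat xh wh)) \<and>
            (\<forall>xh wh. ipha_ok Xi p stage C F r \<sigma> x w xh wh \<longrightarrow>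
                hippm_ok (Lspace Xi) (ipL Xi p) S (1 / r) \<sigma> z (zhat xh wh) (vhat xh wh) \<and>
                (ipha_stop Xi p stage x xh wh \<longleftrightarrow> hippm_stop z (zhat xh wh)) \<and>
                (\<not> ipha_stop Xi p stage x xh wh \<longrightarrow>
                   (\<forall>\<tau>. 1 - \<theta> \<le> \<tau> \<and> \<tau> \<le> 1 + \<theta> \<longrightarrow>
                     (let (x', w') = ipha_update Xi p stage r \<tau> x w xh wh in
                        x' \<in> NA Xi stage \<and> w' \<in> MA Xi p stage \<and>
                        hippm_update (ipL Xi p) \<tau> z (zhat xh wh) (vhat xh wh) = x' - sc (1 / r) w'))))"
proof -
  interpret scenario_space Xi p stage
    using Xi_fin p_pos by unfold_locales
  have "r \<noteq> 0"
    using r_pos by simp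
  have "sc (1/r) w \<in> MA Xi p stage"
    using wM by simp
  then have iterate: "x = projN (x - sc (1/r) w)" "w = sc (- r) (projM (x - sc (1/r) w))"
    using xN \<open>r \<noteq> 0\<close> by (simp_all add: projM_eq fun_eq_iff)
  have trial: "xh \<in> L \<and> wh \<in> L \<and> hippm_ok L ip (ATA Xi p stage C F r) (1/r) \<sigma> (x - sc (1/r) w)
      (projN wh - projM xh - sc (1/r) w) (sc r (x - projN xh + projM wh))"
    if "ipha_ok Xi p stage C F r \<sigma> x w xh wh" for xh wh
    using that hippm_ok_iff_ipha_ok[OF r_pos xN wM] by (simp add: ipha_ok_def)
  show ?thesis
    unfolding Let_def case_prod_beta
    using iterate hippm_ok_iff_ex_ipha_ok[OF r_pos xN wM] trial
      ipha_stop_iff_hippm_stop[where r = r and w = w] hippm_update_eq_ipha_update[OF \<open>r \<noteq> 0\<close>] ipha_update_in_Nspace_Mspace[OF xN wM]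
    by auto
qed

end
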